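(* There is an absolute constant $C$ such that the following holds. Let $d\ge 1$, $\sigma\in(0,1]$, $\theta\in(0,\pi/2)$, and let $L$ be a finite set of closed line segments in $\mathbb{R}^d$ such that (i) $L$ is $\sigma$-exposed, (ii) $\bigcap_{s\in L} s\neq\emptyset$, (iii) for every pair $s,s'\in L$ the angle between $s$ and $s'$ is at most $\theta$, and (iv) $\sin\theta\le \sigma/4$. Then $|L|\le C/\sigma^2$.
   Context: For sets $X, Y\subseteq\mathbb{R}^d$ and $\sigma>0$, $X$ $\sigma$-shadows $Y$ if $\max_{q\in Y} \mathrm{dist}(q, X) \le \sigma\cdot \mathrm{diam}(Y)$, where $\mathrm{dist}(q,X)=\min_{p\in X}\|q-p\|$. A set of objects is $\sigma$-exposed if no object in the set $\sigma$-shadows another (distinct) object of the set. The angle between two segments is the angle in $[0,\pi/2]$ between the lines supporting them. *)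

theory Defs
  imports "HOL-Analysis.Analysis"
begin

text \<open>Since the constant C must be absolute (independent of the dimension d),
the dimension d is an explicit natural number: R^d is represented as the set of
real sequences vanishing from index d on, with the Euclidean metric on the
first d coordinates.\<close>

definition Rd :: "nat \<Rightarrow> (nat \<Rightarrow> real) set" where
  "Rd d = {x. \<forall>i\<ge>d. x i = 0}"

definition edist :: "nat \<Rightarrow> (nat \<Rightarrow> real) \<Rightarrow> (nat \<Rightarrow> real) \<Rightarrow> real" where
  "edist d x y = sqrt (\<Sum>i<d. (x i - y i)^2)"

definition edot :: "nat \<Rightarrow> (nat \<Rightarrow> real) \<Rightarrow> (nat \<Rightarrow> real) \<Rightarrow> real" where
  "edot d u v = (\<Sum>i<d. u i * v i)"

definition enorm :: "nat \<Rightarrow> (nat \<Rightarrow> real) \<Rightarrow> real" where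
  "enorm d u = sqrt (edot d u u)"

definition seg :: "(nat \<Rightarrow> real) \<Rightarrow> (nat \<Rightarrow> real) \<Rightarrow> (nat \<Rightarrow> real) set" where
  "seg p q = {(\<lambda>i. (1 - t) * p i + t * q i) | t. 0 \<le> t \<and> t \<le> 1}"

definition is_segment :: "nat \<Rightarrow> (nat \<Rightarrow> real) set \<Rightarrow> bool" where
  "is_segment d s \<longleftrightarrow> (\<exists>p q. p \<in> Rd d \<and> q \<in> Rd d \<and> p \<noteq> q \<and> s = seg p q)"

definition diam_d :: "nat \<Rightarrow> (nat \<Rightarrow> real) set \<Rightarrow> real" where
  "diam_d d Y = Sup {edist d x y | x y. x \<in> Y \<and> y \<in> Y}"

definition setdist_d :: "nat \<Rightarrow> (nat \<Rightarrow> real) \<Rightarrow> (nat \<Rightarrow> real) set \<Rightarrow> real" where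
  "setdist_d d q X = Inf {edist d q p | p. p \<in> X}"

definition shadows :: "nat \<Rightarrow> real \<Rightarrow> (nat \<Rightarrow> real) set \<Rightarrow> (nat \<Rightarrow> real) set \<Rightarrow> bool" where
  "shadows d \<sigma> X Y \<longleftrightarrow> (\<forall>q\<in>Y. setdist_d d q X \<le> \<sigma> * diam_d d Y)"

definition exposed :: "nat \<Rightarrow> real \<Rightarrow> (nat \<Rightarrow> real) set set \<Rightarrow> bool" where
  "exposed d \<sigma> L \<longleftrightarrow> (\<forall>s\<in>L. \<forall>s'\<in>L. s \<noteq> s' \<longrightarrow> \<not> shadows d \<sigma> s s')"

definition line_angle :: "nat \<Rightarrow> (nat \<Rightarrow> real) \<Rightarrow> (nat \<Rightarrow> real) \<Rightarrow> real" where
  "line_angle d u v = arccos (\<bar>edot d u v\<bar> / (enorm d u * enorm d v))"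

definition endpoints :: "nat \<Rightarrow> (nat \<Rightarrow> real) set \<Rightarrow> (nat \<Rightarrow> real) \<times> (nat \<Rightarrow> real)" where
  "endpoints d s = (SOME pq. fst pq \<in> Rd d \<and> snd pq \<in> Rd d \<and> fst pq \<noteq> snd pq \<and> s = seg (fst pq) (snd pq))"

definition seg_angle :: "nat \<Rightarrow> (nat \<Rightarrow> real) set \<Rightarrow> (nat \<Rightarrow> real) set \<Rightarrow> real" where
  "seg_angle d s s' =
     (let (p, q) = endpoints d s; (p', q') = endpoints d s'
      in line_angle d (\<lambda>i. q i - p i) (\<lambda>i. q' i - p' i))"

end

theory Submission
  imports Defs
begin

text \<open>Orient the segments so that their unit directions are pairwise within \<open>\<sigma>/2\<close>; this is
  possible because all pairwise angles are at most \<open>\<theta>\<close> and \<open>sin \<theta> \<le> \<sigma>/4\<close>. Each segment contains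
  the common point \<open>x0\<close> at some relative position \<open>t \<in> [0,1]\<close>. If two segments had positions
  within \<open>\<sigma>/2\<close> of each other, every point of the shorter one would lie within \<open>\<sigma>\<close> times its
  length of the longer one, i.e. the longer one would \<open>\<sigma>\<close>-shadow the shorter. So the positions
  are \<open>\<sigma>/2\<close>-separated in \<open>[0,1]\<close>, and \<open>|L| \<le> 2/\<sigma> + 1 \<le> 3/\<sigma>\<^sup>2\<close>.\<close>

lemma enorm_eq_L2_set: "enorm d u = L2_set u {..<d}"
  unfolding enorm_def edot_def L2_set_def by (simp add: power2_eq_square)

lemma enorm_nonneg: "0 \<le> enorm d u"
  by (simp add: enorm_eq_L2_set)

lemma edist_eq_enorm: "edist d x y = enorm d (\<lambda>i. x i - y i)"
  unfolding edist_def enorm_def edot_def by (simp add: power2_eq_square)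

lemma enorm_power2: "(enorm d u)\<^sup>2 = edot d u u"
  unfolding enorm_def edot_def by (simp add: sum_nonneg)

lemma enorm_scale: "enorm d (\<lambda>i. c * u i) = \<bar>c\<bar> * enorm d u"
  unfolding enorm_eq_L2_set L2_set_def
  by (simp add: power_mult_distrib real_sqrt_mult flip: sum_distrib_left)

lemma enorm_triangle: "enorm d (\<lambda>i. u i + v i) \<le> enorm d u + enorm d v"
  unfolding enorm_eq_L2_set by (rule L2_set_triangle_ineq)

lemma enorm_diff_commute: "enorm d (\<lambda>i. u i - v i) = enorm d (\<lambda>i. v i - u i)"
  using enorm_scale[of d "-1" "\<lambda>i. u i - v i"] by simp

lemma enorm_diff_power2:
  "(enorm d (\<lambda>i. u i - v i))\<^sup>2 = (enorm d u)\<^sup>2 + (enorm d v)\<^sup>2 - 2 * edot d u v"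
  unfolding enorm_power2 edot_def
  by (simp add: sum_subtractf sum.distrib sum_distrib_left algebra_simps)

lemma abs_edot_le: "\<bar>edot d u v\<bar> \<le> enorm d u * enorm d v"
proof -
  have "\<bar>edot d u v\<bar> \<le> (\<Sum>i<d. \<bar>u i\<bar> * \<bar>v i\<bar>)"
    unfolding edot_def abs_mult[symmetric] by (rule sum_abs)
  also have "\<dots> \<le> enorm d u * enorm d v"
    unfolding enorm_eq_L2_set by (rule L2_set_mult_ineq)
  finally show ?thesis .
qed

lemma enorm_diff_pos:
  assumes "p \<in> Rd d" "q \<in> Rd d" "p \<noteq> q"
  shows "0 < enorm d (\<lambda>i. q i - p i)"
proof -
  obtain i where "p i \<noteq> q i" using assms(3) by blast
  with assms(1,2) have "i < d" unfolding Rd_def by (cases "i < d") auto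
  with \<open>p i \<noteq> q i\<close> have "enorm d (\<lambda>i. q i - p i) \<noteq> 0"
    unfolding enorm_eq_L2_set by (auto simp: L2_set_eq_0_iff intro!: bexI[of _ i])
  with enorm_nonneg[of d "\<lambda>i. q i - p i"] show ?thesis
    by linarith
qed

definition seg_point :: "(nat \<Rightarrow> real) \<Rightarrow> (nat \<Rightarrow> real) \<Rightarrow> real \<Rightarrow> nat \<Rightarrow> real" where
  "seg_point p q t = (\<lambda>i. (1 - t) * p i + t * q i)"

definition unit_dir :: "nat \<Rightarrow> (nat \<Rightarrow> real) \<Rightarrow> (nat \<Rightarrow> real) \<Rightarrow> nat \<Rightarrow> real" where
  "unit_dir d p q = (\<lambda>i. (q i - p i) / enorm d (\<lambda>i. q i - p i))"

lemma seg_eq_image: "seg p q = seg_point p q ` {0..1}"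
  unfolding seg_def seg_point_def by auto

lemma seg_point_commute: "seg_point q p t = seg_point p q (1 - t)"
  unfolding seg_point_def by (simp add: algebra_simps)

lemma seg_commute: "seg p q = seg q p"
proof -
  have "seg_point q p ` {0..1} = seg_point p q ` ((\<lambda>t. 1 - t) ` {0..1})"
    unfolding image_image by (rule image_cong[OF refl seg_point_commute])
  also have "(\<lambda>t. 1 - t) ` {0..1::real} = {0..1}"
    by (auto simp: image_iff intro: bexI[of _ "1 - _"])
  finally show ?thesis by (simp add: seg_eq_image)
qed

lemma edist_seg_point:
  "edist d (seg_point p q a) (seg_point p q b) = \<bar>a - b\<bar> * enorm d (\<lambda>i. q i - p i)"
proof -
  have "(\<lambda>i. seg_point p q a i - seg_point p q b i) = (\<lambda>i. (a - b) * (q i - p i))"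
    unfolding seg_point_def by (auto simp: algebra_simps)
  then show ?thesis by (simp add: edist_eq_enorm enorm_scale)
qed

lemma diam_seg: "diam_d d (seg p q) = enorm d (\<lambda>i. q i - p i)"
proof -
  let ?l = "enorm d (\<lambda>i. q i - p i)"
  have le: "edist d x y \<le> ?l" if "x \<in> seg p q" "y \<in> seg p q" for x y
    using that enorm_nonneg[of d "\<lambda>i. q i - p i"]
    by (auto simp: seg_eq_image edist_seg_point intro!: mult_left_le_one_le)
  have "seg_point p q 1 \<in> seg p q" "seg_point p q 0 \<in> seg p q"
    by (auto simp: seg_eq_image)
  moreover have "edist d (seg_point p q 1) (seg_point p q 0) = ?l"
    by (simp add: edist_seg_point)
  ultimately have attained: "?l \<in> {edist d x y | x y. x \<in> seg p q \<and> y \<in> seg p q}"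
    by (metis (mono_tags, lifting) mem_Collect_eq)
  show ?thesis
    unfolding diam_d_def
  proof (rule antisym)
    show "Sup {edist d x y | x y. x \<in> seg p q \<and> y \<in> seg p q} \<le> ?l"
      using attained le by (intro cSup_least) auto
    show "?l \<le> Sup {edist d x y | x y. x \<in> seg p q \<and> y \<in> seg p q}"
      using le by (intro cSup_upper[OF attained] bdd_aboveI[of _ ?l]) auto
  qed
qed

lemma setdist_le_edist: "z \<in> X \<Longrightarrow> setdist_d d y X \<le> edist d y z"
  unfolding setdist_d_def
  by (rule cInf_lower) (auto simp: edist_eq_enorm enorm_nonneg intro!: bdd_belowI[of _ 0])

lemma enorm_unit_dir: "enorm d (\<lambda>i. q i - p i) \<noteq> 0 \<Longrightarrow> enorm d (unit_dir d p q) = 1"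
  using enorm_scale[of d "1 / enorm d (\<lambda>i. q i - p i)" "\<lambda>i. q i - p i"] enorm_nonneg[of d]
  by (simp add: unit_dir_def)

lemma unit_dir_commute: "unit_dir d q p = (\<lambda>i. - unit_dir d p q i)"
  unfolding unit_dir_def by (subst enorm_diff_commute) (simp add: minus_divide_left)

lemma seg_point_shift:
  assumes "enorm d (\<lambda>i. q i - p i) \<noteq> 0"
  shows "seg_point p q s i
    = seg_point p q t i + (s - t) * enorm d (\<lambda>i. q i - p i) * unit_dir d p q i"
  using assms unfolding seg_point_def unit_dir_def by (simp add: field_simps)

section \<open>Shadowing between nearly parallel concurrent segments\<close>

text \<open>The point at parameter \<open>\<tau>\<close> of the shorter segment is matched with the point of the longer
  one at the same signed offset from the common point, clamped to the longer segment.\<close>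
lemma exists_param_close:
  fixes l l' t t' \<tau> \<delta> :: real
  assumes "0 < l'" "l' \<le> l" "t \<in> {0..1}" "t' \<in> {0..1}" "\<tau> \<in> {0..1}" "\<bar>t - t'\<bar> \<le> \<delta>"
  shows "\<exists>s\<in>{0..1}. \<bar>(\<tau> - t') * l' - (s - t) * l\<bar> \<le> \<delta> * l' \<and> \<bar>(s - t) * l\<bar> \<le> l'"
proof -
  define r where "r = (\<tau> - t') * l'"
  define rs where "rs = max (- t * l) (min ((1 - t) * l) r)"
  have nn: "0 \<le> t * l" "0 \<le> (1 - t) * l"
    using assms by auto
  then have ab: "- t * l \<le> (1 - t) * l"
    by linarith
  have rr: "- t' * l' \<le> r" "r \<le> (1 - t') * l'"
    unfolding r_def using assms by (auto simp: algebra_simps)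
  have m1: "(1 - t) * l' \<le> (1 - t) * l" "t * l' \<le> t * l"
    using assms by (auto intro: mult_left_mono)
  have m2: "t' * l' \<le> l'" "(1 - t') * l' \<le> l'"
    using assms by (auto simp: mult_left_le_one_le)
  have m3: "t \<le> t' \<Longrightarrow> t * l' \<le> t' * l'" "t' \<le> t \<Longrightarrow> t' * l' \<le> t * l'"
    using assms by (auto intro: mult_right_mono)
  have "\<bar>r - rs\<bar> \<le> \<bar>t - t'\<bar> * l'"
    unfolding rs_def using rr m1 m3 ab
    by (auto simp: abs_if algebra_simps max_def min_def split: if_splits)
  also have "\<dots> \<le> \<delta> * l'"
    using assms by (intro mult_right_mono) auto
  finally have close: "\<bar>r - rs\<bar> \<le> \<delta> * l'" .
  have short: "\<bar>rs\<bar> \<le> l'"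
    unfolding rs_def using rr m2 ab nn by (auto simp: abs_if max_def min_def)
  have "- t * l \<le> rs" "rs \<le> (1 - t) * l"
    unfolding rs_def using ab by auto
  then have "t + rs / l \<in> {0..1}" and "(t + rs / l - t) * l = rs"
    using assms by (auto simp: field_simps)
  with close short show ?thesis
    unfolding r_def by (intro bexI[of _ "t + rs / l"]) auto
qed

lemma edist_concurrent_seg_points_le:
  fixes d :: nat and p q p' q' :: "nat \<Rightarrow> real"
  defines "l \<equiv> enorm d (\<lambda>i. q i - p i)" and "l' \<equiv> enorm d (\<lambda>i. q' i - p' i)"
  assumes "l \<noteq> 0" "l' \<noteq> 0" and common: "seg_point p q t = seg_point p' q' t'"
  shows "edist d (seg_point p' q' \<tau>) (seg_point p q s)
    \<le> \<bar>(\<tau> - t') * l' - (s - t) * l\<bar> + \<bar>(s - t) * l\<bar> * enorm d (\<lambda>i. unit_dir d p' q' i - unit_dir d p q i)"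
proof -
  let ?u = "unit_dir d p q" and ?u' = "unit_dir d p' q'"
  define A where "A = (\<tau> - t') * l' - (s - t) * l"
  define B where "B = (s - t) * l"
  have "seg_point p' q' \<tau> i - seg_point p q s i = A * ?u' i + B * (?u' i - ?u i)" for i
  proof -
    have "seg_point p' q' \<tau> i - seg_point p q s i
        = (seg_point p' q' t' i + (\<tau> - t') * l' * ?u' i) - (seg_point p q t i + (s - t) * l * ?u i)"
      using seg_point_shift[where p = p and q = q and s = s and t = t]
        seg_point_shift[where p = p' and q = q' and s = \<tau> and t = t'] assms(3,4)
      by (simp add: l_def l'_def)
    also have "\<dots> = A * ?u' i + B * (?u' i - ?u i)"
      unfolding A_def B_def common by (simp add: algebra_simps)
    finally show ?thesis .
  qed
  then have "edist d (seg_point p' q' \<tau>) (seg_point p q s)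
      = enorm d (\<lambda>i. A * ?u' i + B * (?u' i - ?u i))"
    by (simp add: edist_eq_enorm)
  also have "\<dots> \<le> enorm d (\<lambda>i. A * ?u' i) + enorm d (\<lambda>i. B * (?u' i - ?u i))"
    by (rule enorm_triangle)
  also have "\<dots> = \<bar>A\<bar> + \<bar>B\<bar> * enorm d (\<lambda>i. ?u' i - ?u i)"
    using enorm_unit_dir[of d q' p'] assms(4) by (simp add: enorm_scale l'_def)
  finally show ?thesis
    unfolding A_def B_def .
qed

lemma shadows_shorter_seg:
  fixes d :: nat and p q p' q' :: "nat \<Rightarrow> real"
  defines "l \<equiv> enorm d (\<lambda>i. q i - p i)" and "l' \<equiv> enorm d (\<lambda>i. q' i - p' i)"
  assumes "0 < l'" "l' \<le> l"
    and common: "seg_point p q t = seg_point p' q' t'"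
    and "t \<in> {0..1}" "t' \<in> {0..1}" "\<bar>t - t'\<bar> \<le> \<sigma> / 2"
    and dir: "enorm d (\<lambda>i. unit_dir d p' q' i - unit_dir d p q i) \<le> \<sigma> / 2"
  shows "shadows d \<sigma> (seg p q) (seg p' q')"
  unfolding shadows_def
proof
  fix y assume "y \<in> seg p' q'"
  then obtain \<tau> where y: "y = seg_point p' q' \<tau>" "\<tau> \<in> {0..1}"
    by (auto simp: seg_eq_image)
  obtain s where s: "s \<in> {0..1}"
    and close: "\<bar>(\<tau> - t') * l' - (s - t) * l\<bar> \<le> \<sigma> / 2 * l'" and short: "\<bar>(s - t) * l\<bar> \<le> l'"
    using exists_param_close[of l' l t t' \<tau> "\<sigma> / 2"] assms y(2) by blast
  have "edist d y (seg_point p q s)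
      \<le> \<bar>(\<tau> - t') * l' - (s - t) * l\<bar> + \<bar>(s - t) * l\<bar> * enorm d (\<lambda>i. unit_dir d p' q' i - unit_dir d p q i)"
    unfolding y(1) l_def l'_def using assms(3,4) common
    by (intro edist_concurrent_seg_points_le) (auto simp: l_def l'_def)
  also have "\<dots> \<le> \<sigma> / 2 * l' + l' * (\<sigma> / 2)"
    using close short dir \<open>0 < l'\<close> enorm_nonneg[of d] by (intro add_mono mult_mono) auto
  also have "\<dots> = \<sigma> * diam_d d (seg p' q')"
    by (simp add: diam_seg l'_def)
  finally have "edist d y (seg_point p q s) \<le> \<sigma> * diam_d d (seg p' q')" .
  moreover have "seg_point p q s \<in> seg p q"
    using s by (simp add: seg_eq_image)
  ultimately show "setdist_d d y (seg p q) \<le> \<sigma> * diam_d d (seg p' q')"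
    using setdist_le_edist by (meson order_trans)
qed

section \<open>Directions of segments with small pairwise angles\<close>

lemma edot_uminus_left: "edot d (\<lambda>i. - u i) v = - edot d u v"
  unfolding edot_def by (simp add: sum_negf)

lemma edot_uminus_right: "edot d u (\<lambda>i. - v i) = - edot d u v"
  unfolding edot_def by (simp add: sum_negf)

lemma edot_unit_dir:
  "edot d (unit_dir d p q) (unit_dir d p' q')
    = edot d (\<lambda>i. q i - p i) (\<lambda>i. q' i - p' i)
      / (enorm d (\<lambda>i. q i - p i) * enorm d (\<lambda>i. q' i - p' i))"
  unfolding unit_dir_def edot_def by (simp add: sum_divide_distrib)

lemma cos_le_abs_edot_unit_dir:
  assumes "line_angle d (\<lambda>i. q i - p i) (\<lambda>i. q' i - p' i) \<le> \<theta>" "\<theta> \<le> pi"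
    and "enorm d (\<lambda>i. q i - p i) \<noteq> 0" "enorm d (\<lambda>i. q' i - p' i) \<noteq> 0"
  shows "cos \<theta> \<le> \<bar>edot d (unit_dir d p q) (unit_dir d p' q')\<bar>"
proof -
  let ?X = "\<bar>edot d (unit_dir d p q) (unit_dir d p' q')\<bar>"
  have "?X \<le> 1"
    using abs_edot_le[of d "unit_dir d p q" "unit_dir d p' q'"] enorm_unit_dir assms(3,4) by simp
  moreover have "arccos ?X \<le> \<theta>"
    using assms(1) enorm_nonneg[of d]
    by (simp add: line_angle_def edot_unit_dir abs_divide abs_mult)
  ultimately have "cos \<theta> \<le> cos (arccos ?X)"
    using assms(2) arccos_lbound by (intro cos_monotone_0_pi_le) auto
  with \<open>?X \<le> 1\<close> show ?thesis
    by simp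
qed

text \<open>The triangle inequality through \<open>e\<close> forces \<open>edot d a b > 0\<close>, so the bound on its absolute
  value is a bound on the value itself.\<close>
lemma enorm_diff_power2_le_of_aligned:
  assumes unit: "enorm d a = 1" "enorm d b = 1" "enorm d e = 1"
    and "c \<le> edot d a e" "c \<le> edot d b e" "c \<le> \<bar>edot d a b\<bar>" "3 / 4 < c"
  shows "(enorm d (\<lambda>i. a i - b i))\<^sup>2 \<le> 2 * (1 - c)"
proof -
  define x where "x = enorm d (\<lambda>i. a i - e i)"
  define y where "y = enorm d (\<lambda>i. e i - b i)"
  have x2: "x\<^sup>2 \<le> 2 - 2 * c" and y2: "y\<^sup>2 \<le> 2 - 2 * c"
    unfolding x_def y_def enorm_diff_commute[of d e b] enorm_diff_power2 using assms by auto
  have "enorm d (\<lambda>i. a i - b i) \<le> x + y"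
    unfolding x_def y_def using enorm_triangle[of d "\<lambda>i. a i - e i" "\<lambda>i. e i - b i"] by simp
  then have "(enorm d (\<lambda>i. a i - b i))\<^sup>2 \<le> (x + y)\<^sup>2"
    by (rule power_mono) (rule enorm_nonneg)
  also have "\<dots> \<le> 2 * x\<^sup>2 + 2 * y\<^sup>2"
    using sum_squares_ge_zero[of "x - y" 0] by (simp add: power2_eq_square algebra_simps)
  finally have "2 - 2 * edot d a b < 2"
    using x2 y2 assms unfolding enorm_diff_power2 by simp
  then have "c \<le> edot d a b"
    using assms by simp
  then show ?thesis
    using unit unfolding enorm_diff_power2 by simp
qed

lemma endpoints_of_segment:
  assumes "is_segment d s"
  shows "fst (endpoints d s) \<in> Rd d" "snd (endpoints d s) \<in> Rd d"
    "fst (endpoints d s) \<noteq> snd (endpoints d s)" "seg (fst (endpoints d s)) (snd (endpoints d s)) = s"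
proof -
  obtain p q where "p \<in> Rd d" "q \<in> Rd d" "p \<noteq> q" "s = seg p q"
    using assms unfolding is_segment_def by blast
  then have "\<exists>pq. fst pq \<in> Rd d \<and> snd pq \<in> Rd d \<and> fst pq \<noteq> snd pq \<and> s = seg (fst pq) (snd pq)"
    by (intro exI[of _ "(p, q)"]) simp
  then have "fst (endpoints d s) \<in> Rd d \<and> snd (endpoints d s) \<in> Rd d
      \<and> fst (endpoints d s) \<noteq> snd (endpoints d s) \<and> s = seg (fst (endpoints d s)) (snd (endpoints d s))"
    unfolding endpoints_def by (rule someI_ex)
  then show "fst (endpoints d s) \<in> Rd d" "snd (endpoints d s) \<in> Rd d"
    "fst (endpoints d s) \<noteq> snd (endpoints d s)" "seg (fst (endpoints d s)) (snd (endpoints d s)) = s"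
    by simp_all
qed

lemma cos_le_abs_edot_of_seg_angle_le:
  assumes "is_segment d s" "is_segment d s'" "seg_angle d s s' \<le> \<theta>" "\<theta> \<le> pi"
  shows "cos \<theta> \<le> \<bar>edot d (unit_dir d (fst (endpoints d s)) (snd (endpoints d s)))
    (unit_dir d (fst (endpoints d s')) (snd (endpoints d s')))\<bar>"
proof (rule cos_le_abs_edot_unit_dir)
  show "line_angle d (\<lambda>i. snd (endpoints d s) i - fst (endpoints d s) i)
      (\<lambda>i. snd (endpoints d s') i - fst (endpoints d s') i) \<le> \<theta>"
    using assms(3) by (simp add: seg_angle_def case_prod_beta)
  show "enorm d (\<lambda>i. snd (endpoints d s) i - fst (endpoints d s) i) \<noteq> 0"
    "enorm d (\<lambda>i. snd (endpoints d s') i - fst (endpoints d s') i) \<noteq> 0"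
    using enorm_diff_pos endpoints_of_segment assms(1,2) by (metis less_irrefl)+
qed (fact assms(4))

text \<open>Each segment is oriented to make an acute angle with one fixed segment \<open>s0\<close>.\<close>
lemma exists_aligned_orientation:
  assumes segs: "\<forall>s\<in>L. is_segment d s" and angle: "\<forall>s\<in>L. \<forall>s'\<in>L. seg_angle d s s' \<le> \<theta>"
    and "\<theta> \<le> pi" "3 / 4 < cos \<theta>"
  shows "\<exists>P Q. \<forall>s\<in>L. P s \<in> Rd d \<and> Q s \<in> Rd d \<and> P s \<noteq> Q s \<and> seg (P s) (Q s) = s \<and>
    (\<forall>s'\<in>L. (enorm d (\<lambda>i. unit_dir d (P s) (Q s) i - unit_dir d (P s') (Q s') i))\<^sup>2
      \<le> 2 * (1 - cos \<theta>))"
proof (cases "L = {}")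
  case False
  then obtain s0 where s0: "s0 \<in> L" by blast
  define pp where "pp s = fst (endpoints d s)" for s
  define qq where "qq s = snd (endpoints d s)" for s
  define w where "w s = unit_dir d (pp s) (qq s)" for s
  have ends: "pp s \<in> Rd d" "qq s \<in> Rd d" "pp s \<noteq> qq s" "seg (pp s) (qq s) = s" if "s \<in> L" for s
    using endpoints_of_segment[OF bspec[OF segs that], folded pp_def qq_def] .
  have w_unit: "enorm d (w s) = 1" if "s \<in> L" for s
    unfolding w_def using enorm_unit_dir enorm_diff_pos[OF ends(1-3)[OF that]] by simp
  have w_angle: "cos \<theta> \<le> \<bar>edot d (w s) (w s')\<bar>" if "s \<in> L" "s' \<in> L" for s s'
    unfolding w_def pp_def qq_def using segs angle that assms(3)
    by (intro cos_le_abs_edot_of_seg_angle_le) auto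
  define flip where "flip s \<longleftrightarrow> edot d (w s) (w s0) < 0" for s
  define P where "P s = (if flip s then qq s else pp s)" for s
  define Q where "Q s = (if flip s then pp s else qq s)" for s
  define u where "u s = unit_dir d (P s) (Q s)" for s
  have u_w: "u s = (if flip s then (\<lambda>i. - w s i) else w s)" for s
    unfolding u_def P_def Q_def w_def by (simp add: unit_dir_commute[where p = "pp s" and q = "qq s"])
  have u_unit: "enorm d (u s) = 1" if "s \<in> L" for s
    using w_unit[OF that] enorm_scale[of d "-1" "w s"] by (simp add: u_w)
  have u_s0: "u s0 = w s0"
    using w_unit[OF s0] by (simp add: u_w flip_def enorm_power2[symmetric])
  have u_ref: "cos \<theta> \<le> edot d (u s) (u s0)" if "s \<in> L" for s
    using w_angle[OF that s0] unfolding u_s0 by (auto simp: u_w flip_def edot_uminus_left)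
  have u_angle: "cos \<theta> \<le> \<bar>edot d (u s) (u s')\<bar>" if "s \<in> L" "s' \<in> L" for s s'
    using w_angle[OF that] by (simp add: u_w edot_uminus_left edot_uminus_right)
  show ?thesis
  proof (intro exI ballI conjI)
    fix s s' assume "s \<in> L" "s' \<in> L"
    then show "P s \<in> Rd d" "Q s \<in> Rd d" "P s \<noteq> Q s" "seg (P s) (Q s) = s"
      using ends[OF \<open>s \<in> L\<close>] seg_commute[of "pp s" "qq s"] unfolding P_def Q_def
      by auto
    show "(enorm d (\<lambda>i. unit_dir d (P s) (Q s) i - unit_dir d (P s') (Q s') i))\<^sup>2 \<le> 2 * (1 - cos \<theta>)"
      using \<open>s \<in> L\<close> \<open>s' \<in> L\<close> s0 unfolding u_def[symmetric]
      by (intro enorm_diff_power2_le_of_aligned[where e = "u s0"] u_unit u_ref u_angle assms(4))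
  qed
qed simp

lemma cos_gt_three_quarters:
  fixes \<theta> :: real
  assumes "0 \<le> cos \<theta>" "\<bar>sin \<theta>\<bar> \<le> 1 / 4"
  shows "3 / 4 < cos \<theta>"
proof -
  have "(sin \<theta>)\<^sup>2 \<le> (1 / 4)\<^sup>2"
    using power_mono[OF assms(2) abs_ge_zero, of 2] by simp
  then have "(3 / 4)\<^sup>2 < (cos \<theta>)\<^sup>2"
    using sin_cos_squared_add[of \<theta>] by (simp add: power2_eq_square)
  then show ?thesis
    using assms(1) by (rule power_less_imp_less_base)
qed

lemma one_minus_cos_le_sin_power2:
  fixes \<theta> :: real
  assumes "0 \<le> cos \<theta>"
  shows "1 - cos \<theta> \<le> (sin \<theta>)\<^sup>2"
proof -
  have "(1 - cos \<theta>) * 1 \<le> (1 - cos \<theta>) * (1 + cos \<theta>)"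
    using assms cos_le_one[of \<theta>] by (intro mult_left_mono) auto
  also have "\<dots> = 1 - (cos \<theta>)\<^sup>2"
    by (simp add: power2_eq_square algebra_simps)
  finally show ?thesis
    by (simp add: sin_squared_eq)
qed

lemma exists_orientation_with_close_directions:
  fixes \<sigma> \<theta> :: real
  assumes segs: "\<forall>s\<in>L. is_segment d s" and angle: "\<forall>s\<in>L. \<forall>s'\<in>L. seg_angle d s s' \<le> \<theta>"
    and \<sigma>: "0 < \<sigma>" "\<sigma> \<le> 1" and \<theta>: "0 < \<theta>" "\<theta> < pi / 2" and sin: "sin \<theta> \<le> \<sigma> / 4"
  shows "\<exists>P Q. (\<forall>s\<in>L. P s \<in> Rd d \<and> Q s \<in> Rd d \<and> P s \<noteq> Q s \<and> seg (P s) (Q s) = s) \<and>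
    (\<forall>s\<in>L. \<forall>s'\<in>L. enorm d (\<lambda>i. unit_dir d (P s) (Q s) i - unit_dir d (P s') (Q s') i) \<le> \<sigma> / 2)"
proof -
  have "0 \<le> sin \<theta>" "0 \<le> cos \<theta>"
    using \<theta> by (auto intro: sin_ge_zero cos_ge_zero)
  have "3 / 4 < cos \<theta>"
    using \<open>0 \<le> sin \<theta>\<close> \<open>0 \<le> cos \<theta>\<close> \<sigma> sin by (intro cos_gt_three_quarters) auto
  have "2 * (1 - cos \<theta>) \<le> 2 * (sin \<theta>)\<^sup>2"
    using one_minus_cos_le_sin_power2[OF \<open>0 \<le> cos \<theta>\<close>] by simp
  also have "\<dots> \<le> 2 * (\<sigma> / 4)\<^sup>2"
    using power_mono[OF sin \<open>0 \<le> sin \<theta>\<close>, of 2] by simp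
  also have "\<dots> \<le> (\<sigma> / 2)\<^sup>2"
    by (simp add: power_divide)
  finally have chord: "2 * (1 - cos \<theta>) \<le> (\<sigma> / 2)\<^sup>2" .
  have "\<theta> \<le> pi"
    using \<theta> by simp
  then obtain P Q where PQ: "\<forall>s\<in>L. P s \<in> Rd d \<and> Q s \<in> Rd d \<and> P s \<noteq> Q s \<and> seg (P s) (Q s) = s \<and>
    (\<forall>s'\<in>L. (enorm d (\<lambda>i. unit_dir d (P s) (Q s) i - unit_dir d (P s') (Q s') i))\<^sup>2 \<le> 2 * (1 - cos \<theta>))"
    using exists_aligned_orientation[OF segs angle _ \<open>3 / 4 < cos \<theta>\<close>] by blast
  have dirs: "\<forall>s\<in>L. \<forall>s'\<in>L. enorm d (\<lambda>i. unit_dir d (P s) (Q s) i - unit_dir d (P s') (Q s') i) \<le> \<sigma> / 2"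
  proof (intro ballI)
    fix s s' assume "s \<in> L" "s' \<in> L"
    with PQ have "(enorm d (\<lambda>i. unit_dir d (P s) (Q s) i - unit_dir d (P s') (Q s') i))\<^sup>2 \<le> 2 * (1 - cos \<theta>)"
      by blast
    then have "(enorm d (\<lambda>i. unit_dir d (P s) (Q s) i - unit_dir d (P s') (Q s') i))\<^sup>2 \<le> (\<sigma> / 2)\<^sup>2"
      using chord by (rule order_trans)
    then show "enorm d (\<lambda>i. unit_dir d (P s) (Q s) i - unit_dir d (P s') (Q s') i) \<le> \<sigma> / 2"
      by (rule power2_le_imp_le) (use \<sigma> in simp)
  qed
  with PQ show ?thesis
    by blast
qed

section \<open>Counting\<close>

lemma card_le_of_separated:
  fixes T :: "'a \<Rightarrow> real"
  assumes "0 < \<delta>" and range: "\<forall>x\<in>A. T x \<in> {0..1}"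
    and separated: "\<forall>x\<in>A. \<forall>y\<in>A. x \<noteq> y \<longrightarrow> \<delta> \<le> \<bar>T x - T y\<bar>"
  shows "real (card A) \<le> 1 / \<delta> + 1"
proof -
  define key where "key x = nat \<lfloor>T x / \<delta>\<rfloor>" for x
  have "inj_on key A"
  proof (rule inj_onI, rule ccontr)
    fix x y assume "x \<in> A" "y \<in> A" "key x = key y" "x \<noteq> y"
    moreover have "0 \<le> \<lfloor>T x / \<delta>\<rfloor>" "0 \<le> \<lfloor>T y / \<delta>\<rfloor>"
      using range \<open>x \<in> A\<close> \<open>y \<in> A\<close> \<open>0 < \<delta>\<close> by auto
    ultimately have "\<lfloor>T x / \<delta>\<rfloor> = \<lfloor>T y / \<delta>\<rfloor>"
      unfolding key_def by (metis eq_nat_nat_iff)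
    then have "\<bar>T x / \<delta> - T y / \<delta>\<bar> < 1"
      by linarith
    then have "\<bar>T x - T y\<bar> < \<delta>"
      using \<open>0 < \<delta>\<close> by (simp add: abs_divide flip: diff_divide_distrib)
    with separated \<open>x \<in> A\<close> \<open>y \<in> A\<close> \<open>x \<noteq> y\<close> show False
      by fastforce
  qed
  moreover have "key ` A \<subseteq> {..nat \<lfloor>1 / \<delta>\<rfloor>}"
    using range \<open>0 < \<delta>\<close> by (auto simp: key_def divide_right_mono intro!: nat_mono floor_mono)
  ultimately have "card A \<le> card {..nat \<lfloor>1 / \<delta>\<rfloor>}"
    by (rule card_inj_on_le) simp
  moreover have "real (nat \<lfloor>1 / \<delta>\<rfloor>) \<le> 1 / \<delta>"
    using \<open>0 < \<delta>\<close> of_int_floor_le[of "1 / \<delta>"] by simp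
  ultimately show ?thesis
    by simp
qed

lemma card_le_of_exposed_concurrent_aligned:
  assumes "0 < \<sigma>" "exposed d \<sigma> L" "x0 \<in> \<Inter>L"
    and ends: "\<forall>s\<in>L. P s \<in> Rd d \<and> Q s \<in> Rd d \<and> P s \<noteq> Q s \<and> seg (P s) (Q s) = s"
    and dirs: "\<forall>s\<in>L. \<forall>s'\<in>L.
      enorm d (\<lambda>i. unit_dir d (P s) (Q s) i - unit_dir d (P s') (Q s') i) \<le> \<sigma> / 2"
  shows "real (card L) \<le> 2 / \<sigma> + 1"
proof -
  have "\<forall>s\<in>L. \<exists>t. t \<in> {0..1} \<and> x0 = seg_point (P s) (Q s) t"
    using ends \<open>x0 \<in> \<Inter>L\<close> by (metis Inter_iff imageE seg_eq_image)
  then obtain T where T: "\<forall>s\<in>L. T s \<in> {0..1} \<and> x0 = seg_point (P s) (Q s) (T s)"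
    by metis
  define len where "len s = enorm d (\<lambda>i. Q s i - P s i)" for s
  have sep_shorter: "\<sigma> / 2 \<le> \<bar>T s - T s'\<bar>"
    if "s \<in> L" "s' \<in> L" "s \<noteq> s'" "len s' \<le> len s" for s s'
  proof (rule ccontr)
    assume "\<not> \<sigma> / 2 \<le> \<bar>T s - T s'\<bar>"
    moreover have "seg_point (P s) (Q s) (T s) = seg_point (P s') (Q s') (T s')"
      using T that by (metis (no_types))
    ultimately have "shadows d \<sigma> (seg (P s) (Q s)) (seg (P s') (Q s'))"
      using that T ends dirs enorm_diff_pos[of "P s'" d "Q s'"]
      by (intro shadows_shorter_seg[where t = "T s" and t' = "T s'"]) (auto simp: len_def)
    with \<open>exposed d \<sigma> L\<close> that ends show False
      unfolding exposed_def by metis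
  qed
  have "\<forall>s\<in>L. \<forall>s'\<in>L. s \<noteq> s' \<longrightarrow> \<sigma> / 2 \<le> \<bar>T s - T s'\<bar>"
    by (metis sep_shorter abs_minus_commute le_cases)
  with T \<open>0 < \<sigma>\<close> have "real (card L) \<le> 1 / (\<sigma> / 2) + 1"
    by (intro card_le_of_separated) auto
  then show ?thesis
    by simp
qed

lemma two_div_plus_one_le:
  fixes \<sigma> :: real
  assumes "0 < \<sigma>" "\<sigma> \<le> 1"
  shows "2 / \<sigma> + 1 \<le> 3 / \<sigma>\<^sup>2"
proof -
  have "\<sigma>\<^sup>2 \<le> \<sigma>"
    using assms by (simp add: power2_eq_square mult_left_le_one_le)
  then have "2 / \<sigma> \<le> 2 / \<sigma>\<^sup>2"
    using assms by (intro frac_le) auto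
  moreover have "1 \<le> 1 / \<sigma>\<^sup>2"
    using assms by (simp add: power_le_one)
  ultimately show ?thesis
    by (simp add: add_divide_distrib[symmetric])
qed

theorem mainTheorem5:
  shows "\<exists>C::real. \<forall>(d::nat) (\<sigma>::real) (\<theta>::real) (L::(nat \<Rightarrow> real) set set).
    d \<ge> 1 \<longrightarrow> 0 < \<sigma> \<longrightarrow> \<sigma> \<le> 1 \<longrightarrow> 0 < \<theta> \<longrightarrow> \<theta> < pi / 2 \<longrightarrow>
    finite L \<longrightarrow> (\<forall>s\<in>L. is_segment d s) \<longrightarrow>
    exposed d \<sigma> L \<longrightarrow>
    \<Inter>L \<noteq> {} \<longrightarrow>
    (\<forall>s\<in>L. \<forall>s'\<in>L. seg_angle d s s' \<le> \<theta>) \<longrightarrow>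
    sin \<theta> \<le> \<sigma> / 4 \<longrightarrow>
    real (card L) \<le> C / \<sigma>^2"
proof (intro exI[of _ 3] allI impI)
  fix d :: nat and \<sigma> \<theta> :: real and L :: "(nat \<Rightarrow> real) set set"
  assume \<sigma>: "0 < \<sigma>" "\<sigma> \<le> 1" and \<theta>: "0 < \<theta>" "\<theta> < pi / 2"
    and segs: "\<forall>s\<in>L. is_segment d s" and "exposed d \<sigma> L" and "\<Inter>L \<noteq> {}"
    and angle: "\<forall>s\<in>L. \<forall>s'\<in>L. seg_angle d s s' \<le> \<theta>" and sin: "sin \<theta> \<le> \<sigma> / 4"
  obtain P Q where ends: "\<forall>s\<in>L. P s \<in> Rd d \<and> Q s \<in> Rd d \<and> P s \<noteq> Q s \<and> seg (P s) (Q s) = s"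
    and dirs: "\<forall>s\<in>L. \<forall>s'\<in>L.
      enorm d (\<lambda>i. unit_dir d (P s) (Q s) i - unit_dir d (P s') (Q s') i) \<le> \<sigma> / 2"
    using exists_orientation_with_close_directions[OF segs angle \<sigma> \<theta> sin] by blast
  obtain x0 where "x0 \<in> \<Inter>L"
    using \<open>\<Inter>L \<noteq> {}\<close> by blast
  then have "real (card L) \<le> 2 / \<sigma> + 1"
    by (intro card_le_of_exposed_concurrent_aligned[OF \<sigma>(1) \<open>exposed d \<sigma> L\<close> _ ends dirs])
  also have "\<dots> \<le> 3 / \<sigma>\<^sup>2"
    using \<sigma> by (rule two_div_plus_one_le)
  finally show "real (card L) \<le> 3 / \<sigma>\<^sup>2" .
qed
end
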